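(* For every $\epsilon>0$, every connected graph admits a proper straight-line drawing with spanning ratio smaller than $1+\epsilon$.
   Context: A straight-line drawing maps vertices to distinct points of the plane and edges to straight-line segments between their end-vertices; it is proper if no edge contains a vertex other than its end-vertices. In a straight-line drawing $\Gamma$, $\pi_\Gamma(u,v)$ is the minimum total Euclidean length of a path between $u$ and $v$, $\|uv\|_\Gamma$ is their Euclidean distance, and the spanning ratio is $\max_{u\neq v}\pi_\Gamma(u,v)/\|uv\|_\Gamma$. *)

theory Defs
  imports "HOL-Analysis.Analysis"
begin

definition simple_graph :: "'a set \<Rightarrow> ('a \<Rightarrow> 'a \<Rightarrow> bool) \<Rightarrow> bool" where
  "simple_graph V E \<longleftrightarrow> finite V \<and> (\<forall>u v. E u v \<longrightarrow> u \<in> V \<and> v \<in> V)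
     \<and> (\<forall>u v. E u v \<longrightarrow> E v u) \<and> (\<forall>u. \<not> E u u)"

definition walk :: "'a set \<Rightarrow> ('a \<Rightarrow> 'a \<Rightarrow> bool) \<Rightarrow> 'a list \<Rightarrow> bool" where
  "walk V E xs \<longleftrightarrow> xs \<noteq> [] \<and> set xs \<subseteq> V \<and> (\<forall>i. Suc i < length xs \<longrightarrow> E (xs ! i) (xs ! Suc i))"

definition connected_graph :: "'a set \<Rightarrow> ('a \<Rightarrow> 'a \<Rightarrow> bool) \<Rightarrow> bool" where
  "connected_graph V E \<longleftrightarrow> simple_graph V E \<and>
     (\<forall>u\<in>V. \<forall>v\<in>V. \<exists>xs. walk V E xs \<and> hd xs = u \<and> last xs = v)"

definition straight_line_drawing :: "'a set \<Rightarrow> ('a \<Rightarrow> real^2) \<Rightarrow> bool" where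
  "straight_line_drawing V \<Gamma> \<longleftrightarrow> inj_on \<Gamma> V"

definition proper_drawing :: "'a set \<Rightarrow> ('a \<Rightarrow> 'a \<Rightarrow> bool) \<Rightarrow> ('a \<Rightarrow> real^2) \<Rightarrow> bool" where
  "proper_drawing V E \<Gamma> \<longleftrightarrow> straight_line_drawing V \<Gamma> \<and>
     (\<forall>u v w. E u v \<and> w \<in> V \<and> w \<noteq> u \<and> w \<noteq> v \<longrightarrow> \<Gamma> w \<notin> closed_segment (\<Gamma> u) (\<Gamma> v))"

definition walk_length :: "('a \<Rightarrow> real^2) \<Rightarrow> 'a list \<Rightarrow> real" where
  "walk_length \<Gamma> xs = (\<Sum>i<length xs - 1. dist (\<Gamma> (xs ! i)) (\<Gamma> (xs ! Suc i)))"

definition path_dist :: "'a set \<Rightarrow> ('a \<Rightarrow> 'a \<Rightarrow> bool) \<Rightarrow> ('a \<Rightarrow> real^2) \<Rightarrow> 'a \<Rightarrow> 'a \<Rightarrow> real" where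
  "path_dist V E \<Gamma> u v = Inf {walk_length \<Gamma> xs | xs. walk V E xs \<and> hd xs = u \<and> last xs = v}"

definition spanning_ratio :: "'a set \<Rightarrow> ('a \<Rightarrow> 'a \<Rightarrow> bool) \<Rightarrow> ('a \<Rightarrow> real^2) \<Rightarrow> real" where
  "spanning_ratio V E \<Gamma> = Max {path_dist V E \<Gamma> u v / dist (\<Gamma> u) (\<Gamma> v) | u v. u \<in> V \<and> v \<in> V \<and> u \<noteq> v}"

end

theory Submission
  imports Defs
begin

(*
  Fix a root r and number the vertices injectively so that every vertex other than r has a
  neighbour with a smaller number (refine the hop distance to r). Draw r at the origin and the
  vertex numbered n at the point (R^n, R^2n) of the parabola y = x^2; since no point of a strictly
  convex curve lies on the chord between two others, the drawing is proper. For R large, each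
  vertex is farther from the origin than all lower-numbered vertices by a factor 1/\<delta>. Following
  lower-numbered neighbours from v then reaches r by a walk of length at most
  (1 + \<delta>)/(1 - \<delta>) |v|, and if u is numbered lower than v, the walk from u through r to v has
  length at most ((1 + \<delta>)/(1 - \<delta>))^2 |uv|, because |uv| \<ge> (1 - \<delta>) |v|. Letting \<delta> tend to 0
  gives the theorem.
*)

definition walk_within :: "'a set \<Rightarrow> ('a \<Rightarrow> 'a \<Rightarrow> bool) \<Rightarrow> ('a \<Rightarrow> real^2) \<Rightarrow> 'a \<Rightarrow> 'a \<Rightarrow> real \<Rightarrow> bool" where
  "walk_within V E \<Gamma> u v L \<longleftrightarrow> (\<exists>xs. walk V E xs \<and> hd xs = u \<and> last xs = v \<and> walk_length \<Gamma> xs \<le> L)"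

lemma walk_Cons: "walk V E (x # xs) \<longleftrightarrow> x \<in> V \<and> (xs = [] \<or> E x (hd xs) \<and> walk V E xs)"
  by (cases xs) (auto simp: walk_def nth_Cons split: nat.splits)

lemma walk_length_Cons:
  "xs \<noteq> [] \<Longrightarrow> walk_length \<Gamma> (x # xs) = dist (\<Gamma> x) (\<Gamma> (hd xs)) + walk_length \<Gamma> xs"
  by (cases xs) (simp_all add: walk_length_def sum.lessThan_Suc_shift del: sum.lessThan_Suc)

lemma walk_within_refl: "u \<in> V \<Longrightarrow> walk_within V E \<Gamma> u u 0"
  unfolding walk_within_def by (intro exI[of _ "[u]"]) (simp add: walk_def walk_length_def)

lemma walk_within_mono: "walk_within V E \<Gamma> u v L \<Longrightarrow> L \<le> L' \<Longrightarrow> walk_within V E \<Gamma> u v L'"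
  unfolding walk_within_def by force

lemma walk_within_Cons:
  assumes "simple_graph V E" "E u w" "walk_within V E \<Gamma> w v L"
  shows "walk_within V E \<Gamma> u v (dist (\<Gamma> u) (\<Gamma> w) + L)"
proof -
  obtain xs where xs: "walk V E xs" "hd xs = w" "last xs = v" "walk_length \<Gamma> xs \<le> L"
    using assms(3) unfolding walk_within_def by blast
  have "xs \<noteq> []" "u \<in> V"
    using xs(1) assms(1,2) by (auto simp: walk_def simple_graph_def)
  with xs assms(2) show ?thesis
    unfolding walk_within_def by (intro exI[of _ "u # xs"]) (simp add: walk_Cons walk_length_Cons)
qed

lemma walk_within_trans:
  assumes "simple_graph V E" "walk_within V E \<Gamma> u w L\<^sub>1" "walk_within V E \<Gamma> w v L\<^sub>2"
  shows "walk_within V E \<Gamma> u v (L\<^sub>1 + L\<^sub>2)"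
proof -
  have "walk_within V E \<Gamma> (hd xs) v (walk_length \<Gamma> xs + L\<^sub>2)"
    if "walk V E xs" "last xs = w" for xs
    using that
  proof (induction xs)
    case Nil
    then show ?case by (simp add: walk_def)
  next
    case (Cons x xs)
    show ?case
    proof (cases "xs = []")
      case True
      with Cons.prems assms(3) show ?thesis by (simp add: walk_length_def)
    next
      case False
      with Cons have "E x (hd xs)" "walk_within V E \<Gamma> (hd xs) v (walk_length \<Gamma> xs + L\<^sub>2)"
        by (simp_all add: walk_Cons)
      from walk_within_Cons[OF assms(1) this] False show ?thesis
        by (simp add: walk_length_Cons add.assoc)
    qed
  qed
  with assms(2) show ?thesis
    unfolding walk_within_def[of V E \<Gamma> u w] by (force intro: walk_within_mono)
qed

lemma walk_within_sym:
  assumes "simple_graph V E" "walk_within V E \<Gamma> u v L"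
  shows "walk_within V E \<Gamma> v u L"
proof -
  have "walk_within V E \<Gamma> (last xs) (hd xs) (walk_length \<Gamma> xs)" if "walk V E xs" for xs
    using that
  proof (induction xs)
    case Nil
    then show ?case by (simp add: walk_def)
  next
    case (Cons x xs)
    show ?case
    proof (cases "xs = []")
      case True
      with Cons.prems show ?thesis by (simp add: walk_within_refl walk_def walk_length_def)
    next
      case False
      with Cons have "walk_within V E \<Gamma> (last xs) (hd xs) (walk_length \<Gamma> xs)"
        and edge: "E x (hd xs)" "x \<in> V"
        by (simp_all add: walk_Cons)
      moreover have "walk_within V E \<Gamma> (hd xs) x (dist (\<Gamma> x) (\<Gamma> (hd xs)))"
        using walk_within_Cons[OF assms(1) _ walk_within_refl[OF \<open>x \<in> V\<close>]] edge assms(1)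
        by (fastforce simp: simple_graph_def dist_commute)
      ultimately show ?thesis
        using walk_within_trans[OF assms(1)] False by (simp add: walk_length_Cons add.commute)
    qed
  qed
  with assms(2) show ?thesis
    unfolding walk_within_def[of V E \<Gamma> u v] by (force intro: walk_within_mono)
qed

lemma path_dist_le_walk_within:
  assumes "walk_within V E \<Gamma> u v L"
  shows "path_dist V E \<Gamma> u v \<le> L"
proof -
  obtain xs where xs: "walk V E xs" "hd xs = u" "last xs = v" "walk_length \<Gamma> xs \<le> L"
    using assms unfolding walk_within_def by blast
  have "0 \<le> walk_length \<Gamma> ys" for ys
    by (simp add: walk_length_def sum_nonneg)
  then show ?thesis
    unfolding path_dist_def using xs
    by (intro cInf_lower2[of "walk_length \<Gamma> xs"]) (auto intro: bdd_belowI[of _ 0])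
qed

definition hop_distance :: "'a set \<Rightarrow> ('a \<Rightarrow> 'a \<Rightarrow> bool) \<Rightarrow> 'a \<Rightarrow> 'a \<Rightarrow> nat" where
  "hop_distance V E v r = (LEAST l. \<exists>xs. walk V E xs \<and> hd xs = v \<and> last xs = r \<and> length xs = Suc l)"

lemma hop_distance_walk:
  assumes "connected_graph V E" "v \<in> V" "r \<in> V"
  obtains xs where "walk V E xs" "hd xs = v" "last xs = r" "length xs = Suc (hop_distance V E v r)"
proof -
  obtain xs where xs: "walk V E xs" "hd xs = v" "last xs = r"
    using assms unfolding connected_graph_def by blast
  then have "length xs = Suc (length xs - 1)"
    by (simp add: walk_def)
  with xs have "\<exists>l xs. walk V E xs \<and> hd xs = v \<and> last xs = r \<and> length xs = Suc l"
    by blast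
  from LeastI_ex[OF this] show ?thesis
    using that unfolding hop_distance_def by blast
qed

lemma hop_distance_le:
  "walk V E xs \<Longrightarrow> hd xs = v \<Longrightarrow> last xs = r \<Longrightarrow> length xs = Suc l \<Longrightarrow> hop_distance V E v r \<le> l"
  unfolding hop_distance_def by (rule Least_le) blast

lemma hop_distance_decrease:
  assumes "connected_graph V E" "v \<in> V" "r \<in> V" "v \<noteq> r"
  obtains u where "E v u" "hop_distance V E u r < hop_distance V E v r"
proof -
  obtain xs where xs: "walk V E xs" "hd xs = v" "last xs = r" "length xs = Suc (hop_distance V E v r)"
    using hop_distance_walk[OF assms(1-3)] .
  then obtain ys where ys: "xs = v # ys"
    by (cases xs) (auto simp: walk_def)
  with xs(3) assms(4) have "ys \<noteq> []"
    by auto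
  with xs ys have "E v (hd ys)" "walk V E ys" "last ys = r"
    by (simp_all add: walk_Cons)
  moreover have "length ys = Suc (length ys - 1)"
    using \<open>ys \<noteq> []\<close> by simp
  ultimately
  have "hop_distance V E (hd ys) r < hop_distance V E v r"
    using hop_distance_le[of V E ys] xs(4) ys by fastforce
  with \<open>E v (hd ys)\<close> show ?thesis using that by blast
qed

lemma finite_injective_refinement:
  fixes h :: "'a \<Rightarrow> nat"
  assumes "finite V"
  shows "\<exists>f :: 'a \<Rightarrow> nat. inj_on f V \<and> (\<forall>u\<in>V. \<forall>v\<in>V. h u < h v \<longrightarrow> f u < f v)"
proof -
  obtain g and N :: nat where g: "g ` V = {..<N}" "inj_on g V"
    using finite_imp_inj_to_nat_seg[OF assms] by (auto simp: lessThan_def)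
  then have gN: "v \<in> V \<Longrightarrow> g v < N" for v by blast
  define f where "f v = h v * N + g v" for v
  have "inj_on f V"
  proof (rule inj_onI)
    fix u v assume "u \<in> V" "v \<in> V" "f u = f v"
    then have "(h u * N + g u) mod N = (h v * N + g v) mod N"
      by (simp add: f_def)
    then have "g u = g v"
      using gN[OF \<open>u \<in> V\<close>] gN[OF \<open>v \<in> V\<close>] by simp
    with g(2) \<open>u \<in> V\<close> \<open>v \<in> V\<close> show "u = v" by (simp add: inj_on_def)
  qed
  moreover have "f u < f v" if "u \<in> V" "h u < h v" for u v
  proof -
    have "f u < (h u + 1) * N" using gN[OF \<open>u \<in> V\<close>] by (simp add: f_def)
    also have "\<dots> \<le> h v * N" using \<open>h u < h v\<close> by (intro mult_right_mono) auto
    finally show ?thesis by (simp add: f_def)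
  qed
  ultimately show ?thesis by blast
qed

locale rooted_descent =
  fixes V :: "'a set" and E :: "'a \<Rightarrow> 'a \<Rightarrow> bool" and r :: 'a and f :: "'a \<Rightarrow> nat"
  assumes graph: "simple_graph V E"
    and root: "r \<in> V"
    and descent: "\<And>v. v \<in> V \<Longrightarrow> v \<noteq> r \<Longrightarrow> \<exists>u. E v u \<and> f u < f v"
begin

lemma edge_in_V: "E u v \<Longrightarrow> u \<in> V \<and> v \<in> V"
  using graph by (simp add: simple_graph_def)

lemma root_least: "v \<in> V \<Longrightarrow> f r \<le> f v"
proof (induction "f v" arbitrary: v rule: less_induct)
  case less
  show ?case
  proof (cases "v = r")
    case False
    with descent less.prems obtain u where "E v u" "f u < f v" by blast
    with less.hyps[of u] edge_in_V show ?thesis by fastforce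
  qed simp
qed

end

lemma connected_graph_rooted_descent:
  assumes "connected_graph V E" "r \<in> V"
  obtains f where "inj_on f V" "rooted_descent V E r f"
proof -
  have graph: "simple_graph V E" using assms(1) by (simp add: connected_graph_def)
  then have "finite V"
    by (simp add: simple_graph_def)
  then obtain f :: "'a \<Rightarrow> nat" where f: "inj_on f V"
    "\<forall>u\<in>V. \<forall>v\<in>V. hop_distance V E u r < hop_distance V E v r \<longrightarrow> f u < f v"
    using finite_injective_refinement[of V "\<lambda>v. hop_distance V E v r"] by blast
  have "rooted_descent V E r f"
  proof
    fix v assume "v \<in> V" "v \<noteq> r"
    with hop_distance_decrease[OF assms(1) _ assms(2)] obtain u
      where "E v u" "hop_distance V E u r < hop_distance V E v r" by blast
    with f(2) graph \<open>v \<in> V\<close> show "\<exists>u. E v u \<and> f u < f v"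
      by (auto simp: simple_graph_def)
  qed (use graph assms(2) in auto)
  with f(1) show ?thesis using that by blast
qed

locale descent_drawing = rooted_descent +
  fixes \<Gamma> :: "'a \<Rightarrow> real^2" and \<delta> :: real
  assumes root_origin: "\<Gamma> r = 0"
    and norm_gap: "\<And>u v. u \<in> V \<Longrightarrow> v \<in> V \<Longrightarrow> f u < f v \<Longrightarrow> norm (\<Gamma> u) \<le> \<delta> * norm (\<Gamma> v)"
    and gap_factor: "0 \<le> \<delta>" "\<delta> < 1"
begin

lemma walk_within_to_root:
  assumes "v \<in> V"
  shows "walk_within V E \<Gamma> v r ((1 + \<delta>) / (1 - \<delta>) * norm (\<Gamma> v))"
  using assms
proof (induction "f v" arbitrary: v rule: less_induct)
  case less
  define C where "C = (1 + \<delta>) / (1 - \<delta>)"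
  (* C solves C = 1 + (1 + C) \<delta>, which is exactly what closes the induction step *)
  have C: "0 \<le> C" "1 + (1 + C) * \<delta> = C"
    using gap_factor by (auto simp: C_def field_simps)
  show ?case
  proof (cases "v = r")
    case True
    then show ?thesis by (simp add: root_origin walk_within_refl root)
  next
    case False
    with descent less.prems obtain u where u: "E v u" "f u < f v" "u \<in> V"
      using edge_in_V by blast
    have "dist (\<Gamma> v) (\<Gamma> u) + C * norm (\<Gamma> u) \<le> norm (\<Gamma> v) + (1 + C) * norm (\<Gamma> u)"
      using norm_triangle_ineq4[of "\<Gamma> v" "\<Gamma> u"] by (simp add: dist_norm algebra_simps)
    also have "\<dots> \<le> norm (\<Gamma> v) + (1 + C) * (\<delta> * norm (\<Gamma> v))"
      using norm_gap[OF u(3) less.prems u(2)] C by (intro add_left_mono mult_left_mono) auto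
    also have "\<dots> = (1 + (1 + C) * \<delta>) * norm (\<Gamma> v)"
      by (simp add: algebra_simps)
    also have "\<dots> = C * norm (\<Gamma> v)"
      using C(2) by simp
    finally show ?thesis
      using walk_within_Cons[OF graph u(1) less.hyps[OF u(2,3)]] unfolding C_def
      by (rule walk_within_mono[rotated])
  qed
qed

lemma walk_within_ratio:
  assumes "u \<in> V" "v \<in> V" "f u < f v"
  shows "walk_within V E \<Gamma> u v (((1 + \<delta>) / (1 - \<delta>))\<^sup>2 * dist (\<Gamma> u) (\<Gamma> v))"
proof -
  define C where "C = (1 + \<delta>) / (1 - \<delta>)"
  have C: "0 \<le> C" "C * (1 - \<delta>) = 1 + \<delta>"
    using gap_factor by (simp_all add: C_def)
  have walk: "walk_within V E \<Gamma> u v (C * norm (\<Gamma> u) + C * norm (\<Gamma> v))"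
    using walk_within_trans[OF graph walk_within_to_root[OF assms(1)]
        walk_within_sym[OF graph walk_within_to_root[OF assms(2)]]]
    unfolding C_def .
  have "C * norm (\<Gamma> u) + C * norm (\<Gamma> v) \<le> C * ((1 + \<delta>) * norm (\<Gamma> v))"
    using mult_left_mono[OF norm_gap[OF assms] C(1)] by (simp add: algebra_simps)
  also have "\<dots> = C\<^sup>2 * ((1 - \<delta>) * norm (\<Gamma> v))"
    by (simp flip: C(2) add: power2_eq_square)
  also have "\<dots> \<le> C\<^sup>2 * dist (\<Gamma> u) (\<Gamma> v)"
  proof (intro mult_left_mono)
    show "(1 - \<delta>) * norm (\<Gamma> v) \<le> dist (\<Gamma> u) (\<Gamma> v)"
      using norm_gap[OF assms] norm_triangle_ineq2[of "\<Gamma> v" "\<Gamma> u"]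
      by (simp add: dist_norm norm_minus_commute algebra_simps)
  qed simp
  finally show ?thesis
    using walk unfolding C_def by (rule walk_within_mono[rotated])
qed

lemma spanning_ratio_le:
  assumes "inj_on f V" "inj_on \<Gamma> V" "card V \<ge> 2"
  shows "spanning_ratio V E \<Gamma> \<le> ((1 + \<delta>) / (1 - \<delta>))\<^sup>2"
proof -
  let ?ratio = "\<lambda>(u, v). path_dist V E \<Gamma> u v / dist (\<Gamma> u) (\<Gamma> v)"
  let ?S = "{path_dist V E \<Gamma> u v / dist (\<Gamma> u) (\<Gamma> v) | u v. u \<in> V \<and> v \<in> V \<and> u \<noteq> v}"
  have "finite V"
    using graph by (simp add: simple_graph_def)
  moreover have "?S \<subseteq> ?ratio ` (V \<times> V)"
    by auto
  ultimately have "finite ?S"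
    by (meson finite_SigmaI finite_imageI finite_subset)
  moreover have "?S \<noteq> {}"
  proof -
    obtain u v where "u \<in> V" "v \<in> V" "u \<noteq> v"
      using assms(3) card_le_Suc0_iff_eq[OF \<open>finite V\<close>] by fastforce
    then show ?thesis by blast
  qed
  moreover have "x \<le> ((1 + \<delta>) / (1 - \<delta>))\<^sup>2" if "x \<in> ?S" for x
  proof -
    from that obtain u v where uv: "x = path_dist V E \<Gamma> u v / dist (\<Gamma> u) (\<Gamma> v)" "u \<in> V" "v \<in> V" "u \<noteq> v"
      by blast
    then have "\<Gamma> u \<noteq> \<Gamma> v" "f u \<noteq> f v"
      using assms(1,2) by (auto dest: inj_onD)
    then have "0 < dist (\<Gamma> u) (\<Gamma> v)" "f u < f v \<or> f v < f u"
      by auto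
    then have "walk_within V E \<Gamma> u v (((1 + \<delta>) / (1 - \<delta>))\<^sup>2 * dist (\<Gamma> u) (\<Gamma> v))"
      using walk_within_ratio[OF uv(2,3)] walk_within_sym[OF graph walk_within_ratio[OF uv(3,2)]]
      by (auto simp: dist_commute)
    then have "path_dist V E \<Gamma> u v \<le> ((1 + \<delta>) / (1 - \<delta>))\<^sup>2 * dist (\<Gamma> u) (\<Gamma> v)"
      by (rule path_dist_le_walk_within)
    with \<open>0 < dist (\<Gamma> u) (\<Gamma> v)\<close> show ?thesis
      using uv(1) by (simp add: divide_le_eq)
  qed
  ultimately show ?thesis
    unfolding spanning_ratio_def by (rule Max.boundedI)
qed

end

definition parabola :: "real \<Rightarrow> real^2" where
  "parabola t = vector [t, t\<^sup>2]"

lemma parabola_0 [simp]: "parabola 0 = 0"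
  by (simp add: parabola_def vec_eq_iff forall_2)

lemma inj_parabola: "inj parabola"
  by (rule injI) (metis parabola_def vector_2(1))

lemma parabola_notin_chord:
  assumes "c \<noteq> a" "c \<noteq> b"
  shows "parabola c \<notin> closed_segment (parabola a) (parabola b)"
proof
  assume "parabola c \<in> closed_segment (parabola a) (parabola b)"
  then obtain s where s: "0 \<le> s" "s \<le> 1" "parabola c = (1 - s) *\<^sub>R parabola a + s *\<^sub>R parabola b"
    by (auto simp: in_segment)
  have "c = (1 - s) * a + s * b"
    using arg_cong[OF s(3), of "\<lambda>x. x $ 1"] by (simp add: parabola_def)
  moreover have "c\<^sup>2 = (1 - s) * a\<^sup>2 + s * b\<^sup>2"
    using arg_cong[OF s(3), of "\<lambda>x. x $ 2"] by (simp add: parabola_def)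
  moreover have "(1 - s) * a\<^sup>2 + s * b\<^sup>2 - ((1 - s) * a + s * b)\<^sup>2 = s * (1 - s) * (a - b)\<^sup>2"
    by (simp add: power2_eq_square algebra_simps)
  ultimately have "s = 0 \<or> s = 1 \<or> a = b"
    by simp
  with \<open>c = (1 - s) * a + s * b\<close> assms show False
    by (auto simp: algebra_simps)
qed

lemma norm_parabola_ge: "t\<^sup>2 \<le> norm (parabola t)"
  using component_le_norm_cart[of "parabola t" 2] by (simp add: parabola_def)

lemma norm_parabola_le: "norm (parabola t) \<le> \<bar>t\<bar> + t\<^sup>2"
  using norm_le_l1_cart[of "parabola t"] by (simp add: parabola_def sum_2)

lemma norm_parabola_gap:
  assumes "1 \<le> s" "0 \<le> R" "R * s \<le> t" "0 \<le> \<delta>" "2 \<le> \<delta> * R\<^sup>2"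
  shows "norm (parabola s) \<le> \<delta> * norm (parabola t)"
proof -
  have "s \<le> s\<^sup>2"
    using assms(1) by (simp add: power2_eq_square)
  then have "norm (parabola s) \<le> 2 * s\<^sup>2"
    using norm_parabola_le[of s] assms(1) by simp
  also have "\<dots> \<le> \<delta> * R\<^sup>2 * s\<^sup>2"
    using assms(5) by (intro mult_right_mono) auto
  also have "\<dots> \<le> \<delta> * t\<^sup>2"
    using assms(1-4) by (simp add: mult.assoc flip: power_mult_distrib)
      (intro mult_left_mono power_mono; simp)
  also have "\<dots> \<le> \<delta> * norm (parabola t)"
    using assms(4) norm_parabola_ge by (rule mult_left_mono[rotated])
  finally show ?thesis .
qed

definition parabola_drawing :: "'a \<Rightarrow> ('a \<Rightarrow> nat) \<Rightarrow> real \<Rightarrow> 'a \<Rightarrow> real^2" where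
  "parabola_drawing r f R v = parabola (if v = r then 0 else R ^ f v)"

context rooted_descent
begin

lemma proper_parabola_drawing:
  assumes "inj_on f V" "1 < R"
  shows "proper_drawing V E (parabola_drawing r f R)"
proof -
  define t where "t v = (if v = r then 0 else R ^ f v)" for v
  have "inj_on t V"
  proof (rule inj_onI)
    fix u v assume "u \<in> V" "v \<in> V" "t u = t v"
    moreover have "R ^ n \<noteq> 0" for n
      using assms(2) by simp
    ultimately have "u = v \<or> f u = f v"
      using assms(2) by (auto simp: t_def split: if_splits)
    with assms(1) \<open>u \<in> V\<close> \<open>v \<in> V\<close> show "u = v"
      by (auto dest: inj_onD)
  qed
  then have "inj_on (parabola \<circ> t) V"
    using inj_parabola by (simp add: comp_inj_on inj_on_subset)
  moreover have "parabola (t w) \<notin> closed_segment (parabola (t u)) (parabola (t v))"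
    if "E u v" "w \<in> V" "w \<noteq> u" "w \<noteq> v" for u v w
    using that edge_in_V[OF \<open>E u v\<close>] \<open>inj_on t V\<close>
    by (intro parabola_notin_chord) (auto dest: inj_onD)
  ultimately show ?thesis
    unfolding proper_drawing_def straight_line_drawing_def parabola_drawing_def t_def
    by (simp add: comp_def)
qed

lemma descent_drawing_parabola:
  assumes "0 \<le> \<delta>" "\<delta> < 1" "1 < R" "2 \<le> \<delta> * R\<^sup>2"
  shows "descent_drawing V E r f (parabola_drawing r f R) \<delta>"
proof
  fix u v assume uv: "u \<in> V" "v \<in> V" "f u < f v"
  show "norm (parabola_drawing r f R u) \<le> \<delta> * norm (parabola_drawing r f R v)"
  proof (cases "u = r")
    case True
    then show ?thesis by (simp add: parabola_drawing_def assms(1))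
  next
    case False
    have "v \<noteq> r"
      using root_least[OF uv(1)] uv(3) by auto
    have "R * R ^ f u \<le> R ^ f v"
      using assms(3) uv(3) by (simp flip: power_Suc add: power_increasing)
    moreover have "1 \<le> R ^ f u"
      using assms(3) by simp
    ultimately show ?thesis
      using False \<open>v \<noteq> r\<close> assms norm_parabola_gap[of "R ^ f u" R "R ^ f v" \<delta>]
      unfolding parabola_drawing_def by simp
  qed
qed (use assms in \<open>simp_all add: parabola_drawing_def\<close>)

end

lemma descent_ratio_close_to_1:
  fixes \<epsilon> :: real
  assumes "\<epsilon> > 0"
  obtains \<delta> where "0 < \<delta>" "\<delta> < 1" "((1 + \<delta>) / (1 - \<delta>))\<^sup>2 < 1 + \<epsilon>"
proof -
  have "((\<lambda>\<delta>. ((1 + \<delta>) / (1 - \<delta>))\<^sup>2) \<longlongrightarrow> ((1 + 0) / (1 - 0))\<^sup>2) (at_right (0::real))"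
    by (intro tendsto_intros) auto
  then have "\<forall>\<^sub>F \<delta> in at_right 0. ((1 + \<delta>) / (1 - \<delta>))\<^sup>2 < 1 + \<epsilon>"
    using assms by (intro order_tendstoD) auto
  moreover have "\<forall>\<^sub>F \<delta> in at_right 0. \<delta> \<in> {0<..<1::real}"
    by (rule eventually_at_right_real) simp
  ultimately have "\<forall>\<^sub>F \<delta> in at_right 0. ((1 + \<delta>) / (1 - \<delta>))\<^sup>2 < 1 + \<epsilon> \<and> \<delta> \<in> {0<..<1}"
    by (rule eventually_conj)
  then show ?thesis
    using eventually_happens'[OF trivial_limit_at_right_real] that by auto
qed

theorem theorem5:
  fixes V :: "'a set" and E :: "'a \<Rightarrow> 'a \<Rightarrow> bool" and \<epsilon> :: real
  assumes "\<epsilon> > 0" and "connected_graph V E" and "card V \<ge> 2"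
  shows "\<exists>\<Gamma>. proper_drawing V E \<Gamma> \<and> spanning_ratio V E \<Gamma> < 1 + \<epsilon>"
proof -
  obtain \<delta> where \<delta>: "0 < \<delta>" "\<delta> < 1" "((1 + \<delta>) / (1 - \<delta>))\<^sup>2 < 1 + \<epsilon>"
    using descent_ratio_close_to_1[OF assms(1)] .
  have "V \<noteq> {}"
    using assms(3) by auto
  then obtain r where "r \<in> V"
    by blast
  then obtain f where "inj_on f V" "rooted_descent V E r f"
    using connected_graph_rooted_descent[OF assms(2)] by blast
  define R where "R = 2 / \<delta>"
  have R: "1 < R" "2 \<le> \<delta> * R\<^sup>2"
    using \<delta>(1,2) by (simp_all add: R_def power2_eq_square le_divide_eq)
  define \<Gamma> where "\<Gamma> = parabola_drawing r f R"
  have proper: "proper_drawing V E \<Gamma>"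
    unfolding \<Gamma>_def by (rule rooted_descent.proper_parabola_drawing) fact+
  have drawing: "descent_drawing V E r f \<Gamma> \<delta>"
    unfolding \<Gamma>_def using \<open>rooted_descent V E r f\<close> \<delta> R
    by (intro rooted_descent.descent_drawing_parabola) simp_all
  have "inj_on \<Gamma> V"
    using proper by (simp add: proper_drawing_def straight_line_drawing_def)
  from descent_drawing.spanning_ratio_le[OF drawing \<open>inj_on f V\<close> this assms(3)]
  have "spanning_ratio V E \<Gamma> \<le> ((1 + \<delta>) / (1 - \<delta>))\<^sup>2" .
  with \<delta>(3) proper show ?thesis
    by force
qed

end
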